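(* Under assumptions (AR-B1) and (AR-B2), for every $\boldsymbol\theta=(\rho,\boldsymbol\beta,\sigma)\in\boldsymbol\Theta$ the Kullback–Leibler divergence rate $h(\boldsymbol\theta)=\lim_{n\to\infty}n^{-1}E_P[\log(p(\mathbf X_n)/f_{\boldsymbol\theta}(\mathbf X_n))]$ exists and, writing $A_0=\frac{\sigma_0^2+\boldsymbol\beta_0'\Sigma_z\boldsymbol\beta_0}{1-\rho_0^2}$, $$h(\boldsymbol\theta)=\log\frac{\sigma}{\sigma_0}+\Big(\frac{1}{2\sigma^2}-\frac{1}{2\sigma_0^2}\Big)A_0+\Big(\frac{\rho^2}{2\sigma^2}-\frac{\rho_0^2}{2\sigma_0^2}\Big)A_0+\frac{\boldsymbol\beta'\Sigma_z\boldsymbol\beta}{2\sigma^2}-\frac{\boldsymbol\beta_0'\Sigma_z\boldsymbol\beta_0}{2\sigma_0^2}-\Big(\frac{\rho}{\sigma^2}-\frac{\rho_0}{\sigma_0^2}\Big)\rho_0A_0-\Big(\frac{\boldsymbol\beta}{\sigma^2}-\frac{\boldsymbol\beta_0}{\sigma_0^2}\Big)'\Sigma_z\boldsymbol\beta_0.$$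
   Context: True model $P$: $x_t=\rho_0x_{t-1}+\mathbf z_t'\boldsymbol\beta_0+\epsilon_t$ for $t=1,2,\ldots$, with $x_0=0$, $|\rho_0|<1$, $\epsilon_t$ i.i.d. $N(0,\sigma_0^2)$, where $\mathbf z_t\in\mathbb R^{m+1}$ are given (non-random) covariate vectors. Postulated model: the same equation with unknown $\boldsymbol\theta=(\rho,\boldsymbol\beta,\sigma)\in\boldsymbol\Theta=\mathbb R\times\mathbb R^{m+1}\times(0,\infty)$ in place of $\boldsymbol\theta_0=(\rho_0,\boldsymbol\beta_0,\sigma_0)$, i.e. $f_{\boldsymbol\theta}(\mathbf X_n)=\prod_{t=1}^n(2\pi\sigma^2)^{-1/2}\exp\{-(x_t-\rho x_{t-1}-\mathbf z_t'\boldsymbol\beta)^2/(2\sigma^2)\}$ for $\mathbf X_n=(x_1,\ldots,x_n)$, and $p=f_{\boldsymbol\theta_0}$. Assumptions: (AR-B1) as $n\to\infty$, $n^{-1}\sum_{t=1}^n\mathbf z_t\to\mathbf 0$, $n^{-1}\sum_{t=1}^n\mathbf z_{t+k}\mathbf z_t'\to\mathbf 0$ for every $k\ge1$, and $n^{-1}\sum_{t=1}^n\mathbf z_t\mathbf z_t'\to\Sigma_z$; (AR-B2) $\sup_{t\ge1}|\mathbf z_t'\boldsymbol\beta_0|<C$ for some $C>0$. *)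

theory Defs
  imports "HOL-Probability.Probability"
begin

fun ar_proc :: "real \<Rightarrow> real ^ 'm \<Rightarrow> (nat \<Rightarrow> real ^ 'm) \<Rightarrow> (nat \<Rightarrow> 'a \<Rightarrow> real) \<Rightarrow> nat \<Rightarrow> 'a \<Rightarrow> real"
  where
  "ar_proc \<rho> \<beta> z eps 0 \<omega> = 0"
| "ar_proc \<rho> \<beta> z eps (Suc t) \<omega> =
     \<rho> * ar_proc \<rho> \<beta> z eps t \<omega> + z (Suc t) \<bullet> \<beta> + eps (Suc t) \<omega>"

definition ar_density :: "real \<Rightarrow> real ^ 'm \<Rightarrow> real \<Rightarrow> (nat \<Rightarrow> real ^ 'm) \<Rightarrow> nat \<Rightarrow> (nat \<Rightarrow> real) \<Rightarrow> real"
  where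
  "ar_density \<rho> \<beta> \<sigma> z n x =
     (\<Prod>t = 1..n. normal_density 0 \<sigma> (x t - \<rho> * x (t - 1) - z t \<bullet> \<beta>))"

definition outer :: "real ^ 'm \<Rightarrow> real ^ 'm \<Rightarrow> real ^ 'm ^ 'm"
  where "outer u v = (\<chi> i j. u $ i * v $ j)"

end

theory Submission
  imports Defs
begin

text \<open>Along the true path the postulated model leaves the residual
  \<open>R t = \<epsilon> t + (\<rho>0 - \<rho>) x (t - 1) + z t \<bullet> (\<beta>0 - \<beta>)\<close>, so the log-likelihood ratio of the
  first \<open>n\<close> observations is \<open>\<Sum>t. ln (\<sigma> / \<sigma>0) + (R t)\<^sup>2 / (2\<sigma>\<^sup>2) - (\<epsilon> t)\<^sup>2 / (2\<sigma>0\<^sup>2)\<close>.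
  Since \<open>\<epsilon> t\<close> is centred and uncorrelated with \<open>x (t - 1)\<close>, the expectation of \<open>(R t)\<^sup>2\<close>
  involves only the mean \<open>\<mu> t\<close> and the second moment \<open>m t\<close> of \<open>x t\<close>. With \<open>c t = z t \<bullet> \<beta>0\<close>
  they obey the stable linear recursions \<open>\<mu> t = \<rho>0 \<mu> (t - 1) + c t\<close> and
  \<open>m t = \<rho>0\<^sup>2 m (t - 1) + \<sigma>0\<^sup>2 + (c t)\<^sup>2 + 2 \<rho>0 c t \<mu> (t - 1)\<close>, and Cesaro-averaging such a
  recursion divides the mean of its input by \<open>1 - \<rho>0\<^sup>2\<close>; this produces \<open>A0\<close>. The cross
  terms \<open>\<mu> (t - 1)\<close> times a covariate average out: \<open>\<mu>\<close> is a geometric mixture of lagged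
  covariates, every lag averages to zero by (AR-B1), and Tannery's theorem passes the limit
  through the mixture.\<close>

section \<open>Cesaro means of deterministic sequences\<close>

definition cesaro_mean :: "(nat \<Rightarrow> real) \<Rightarrow> nat \<Rightarrow> real" where
  "cesaro_mean f = (\<lambda>n. (1 / real n) * (\<Sum>t = 1..n. f t))"

lemma cesaro_mean_tendsto_const: "cesaro_mean (\<lambda>_. k) \<longlonglongrightarrow> k"
proof (rule Lim_transform_eventually[OF tendsto_const])
  show "\<forall>\<^sub>F n in sequentially. k = cesaro_mean (\<lambda>_. k) n"
    using eventually_ge_at_top[of 1] by eventually_elim (simp add: cesaro_mean_def)
qed

lemma cesaro_mean_tendsto_add:
  "cesaro_mean f \<longlonglongrightarrow> F \<Longrightarrow> cesaro_mean g \<longlonglongrightarrow> G \<Longrightarrow> cesaro_mean (\<lambda>t. f t + g t) \<longlonglongrightarrow> F + G"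
  unfolding cesaro_mean_def by (simp add: sum.distrib distrib_left tendsto_add)

lemma cesaro_mean_tendsto_mult_left:
  assumes "cesaro_mean f \<longlonglongrightarrow> F"
  shows "cesaro_mean (\<lambda>t. a * f t) \<longlonglongrightarrow> a * F"
proof -
  have "cesaro_mean (\<lambda>t. a * f t) = (\<lambda>n. a * cesaro_mean f n)"
    unfolding cesaro_mean_def by (intro ext) (simp add: sum_distrib_left[symmetric])
  then show ?thesis
    using tendsto_mult_left[OF assms] by simp
qed

lemma scaled_shift_tendsto_zero:
  fixes g :: "nat \<Rightarrow> real"
  assumes "g \<longlonglongrightarrow> 0"
  shows "(\<lambda>n. real (n - k) / real n * g (n - k)) \<longlonglongrightarrow> 0"
proof (rule Lim_null_comparison)
  have "(\<lambda>n. g (n - k)) \<longlonglongrightarrow> 0"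
    by (rule filterlim_compose[OF assms filterlim_minus_const_nat_at_top])
  then show "(\<lambda>n. \<bar>g (n - k)\<bar>) \<longlonglongrightarrow> 0"
    by (simp add: tendsto_rabs_zero_iff)
  show "\<forall>\<^sub>F n in sequentially. norm (real (n - k) / real n * g (n - k)) \<le> \<bar>g (n - k)\<bar>"
  proof (intro always_eventually allI)
    fix n
    have "0 \<le> real (n - k) / real n" "real (n - k) / real n \<le> 1"
      by (auto simp: divide_le_eq_1)
    then have "real (n - k) / real n * \<bar>g (n - k)\<bar> \<le> \<bar>g (n - k)\<bar>"
      by (intro mult_left_le_one_le) auto
    then show "norm (real (n - k) / real n * g (n - k)) \<le> \<bar>g (n - k)\<bar>"
      using \<open>0 \<le> real (n - k) / real n\<close> by (simp add: abs_mult)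
  qed
qed

lemma sum_lagged_reindex:
  fixes c d :: "nat \<Rightarrow> real"
  shows "(\<Sum>t = 1..n. (if k < t - 1 then c (t - 1 - k) else 0) * d t)
       = (\<Sum>s = 1..n - Suc k. c s * d (s + Suc k))"
proof (induction n)
  case 0
  then show ?case by simp
next
  case (Suc n)
  show ?case
  proof (cases "k < n")
    case True
    then have "n - Suc k + Suc k = n" "n - k = Suc (n - Suc k)" "Suc n - Suc k = Suc (n - Suc k)"
      by auto
    then show ?thesis
      using Suc True by simp
  next
    case False
    then show ?thesis using Suc by simp
  qed
qed

lemma cesaro_lagged_tendsto_zero:
  fixes c d :: "nat \<Rightarrow> real"
  assumes "cesaro_mean (\<lambda>s. c s * d (s + Suc k)) \<longlonglongrightarrow> 0"
  shows "cesaro_mean (\<lambda>t. (if k < t - 1 then c (t - 1 - k) else 0) * d t) \<longlonglongrightarrow> 0"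
proof -
  have "cesaro_mean (\<lambda>t. (if k < t - 1 then c (t - 1 - k) else 0) * d t)
      = (\<lambda>n. real (n - Suc k) / real n * cesaro_mean (\<lambda>s. c s * d (s + Suc k)) (n - Suc k))"
    unfolding cesaro_mean_def sum_lagged_reindex by (rule ext) (simp add: divide_simps)
  then show ?thesis
    using scaled_shift_tendsto_zero[OF assms] by simp
qed

lemma cesaro_lagged_bound:
  fixes c d :: "nat \<Rightarrow> real"
  assumes c: "\<And>t. t \<ge> 1 \<Longrightarrow> \<bar>c t\<bar> \<le> C" and d: "\<And>n. (\<Sum>t = 1..n. \<bar>d t\<bar>) \<le> D * real n"
  shows "\<bar>cesaro_mean (\<lambda>t. (if k < t - 1 then c (t - 1 - k) else 0) * d t) n\<bar> \<le> C * D"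
proof -
  have "0 \<le> C" "0 \<le> D"
    using c[of 1] d[of 1] by auto
  have "\<bar>\<Sum>t = 1..n. (if k < t - 1 then c (t - 1 - k) else 0) * d t\<bar> \<le> (\<Sum>t = 1..n. C * \<bar>d t\<bar>)"
  proof (rule order_trans[OF sum_abs sum_mono])
    fix t
    show "\<bar>(if k < t - 1 then c (t - 1 - k) else 0) * d t\<bar> \<le> C * \<bar>d t\<bar>"
      using c[of "t - 1 - k"] \<open>0 \<le> C\<close> by (auto simp: abs_mult intro!: mult_right_mono)
  qed
  also have "\<dots> \<le> C * (D * real n)"
    using d[of n] \<open>0 \<le> C\<close> by (simp add: sum_distrib_left[symmetric] mult_left_mono)
  finally show ?thesis
    using \<open>0 \<le> C\<close> \<open>0 \<le> D\<close>
    by (cases "n = 0") (simp_all add: cesaro_mean_def abs_mult field_simps)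
qed

fun ar_filter :: "real \<Rightarrow> (nat \<Rightarrow> real) \<Rightarrow> nat \<Rightarrow> real" where
  "ar_filter r c 0 = 0"
| "ar_filter r c (Suc t) = r * ar_filter r c t + c (Suc t)"

lemma ar_filter_eq_sum: "ar_filter r c t = (\<Sum>j<t. r^j * c (t - j))"
proof (induction t)
  case 0
  then show ?case by simp
next
  case (Suc t)
  have "(\<Sum>j<Suc t. r^j * c (Suc t - j)) = c (Suc t) + r * (\<Sum>j<t. r^j * c (t - j))"
    by (subst sum.lessThan_Suc_shift) (simp add: sum_distrib_left mult.assoc)
  then show ?case
    using Suc by simp
qed

lemma sum_ar_filter_times_eq_lagged:
  fixes c d :: "nat \<Rightarrow> real"
  shows "(\<Sum>t = 1..n. ar_filter r c (t - 1) * d t)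
     = (\<Sum>k<n. r^k * (\<Sum>t = 1..n. (if k < t - 1 then c (t - 1 - k) else 0) * d t))"
proof -
  have "ar_filter r c (t - 1) = (\<Sum>k<n. if k < t - 1 then r^k * c (t - 1 - k) else 0)"
    if "t \<le> n" for t
  proof -
    have "(\<Sum>k<n. if k < t - 1 then r^k * c (t - 1 - k) else 0)
        = (\<Sum>k \<in> {..<n} \<inter> {..<t - 1}. r^k * c (t - 1 - k))"
      by (subst sum.inter_restrict) (auto intro!: sum.cong)
    also have "{..<n} \<inter> {..<t - 1} = {..<t - 1}"
      using that by auto
    finally show ?thesis
      by (simp add: ar_filter_eq_sum)
  qed
  then have "(\<Sum>t = 1..n. ar_filter r c (t - 1) * d t)
      = (\<Sum>t = 1..n. \<Sum>k<n. (if k < t - 1 then r^k * c (t - 1 - k) else 0) * d t)"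
    by (auto simp: sum_distrib_right intro!: sum.cong)
  also have "\<dots> = (\<Sum>k<n. r^k * (\<Sum>t = 1..n. (if k < t - 1 then c (t - 1 - k) else 0) * d t))"
    by (subst sum.swap) (auto simp: sum_distrib_left intro!: sum.cong)
  finally show ?thesis .
qed

lemma cesaro_ar_filter_cross_tendsto_zero:
  fixes c d :: "nat \<Rightarrow> real"
  assumes r: "\<bar>r\<bar> < 1" and c: "\<And>t. t \<ge> 1 \<Longrightarrow> \<bar>c t\<bar> \<le> C"
    and d: "\<And>n. (\<Sum>t = 1..n. \<bar>d t\<bar>) \<le> D * real n"
    and lag: "\<And>k. k \<ge> 1 \<Longrightarrow> cesaro_mean (\<lambda>s. c s * d (s + k)) \<longlonglongrightarrow> 0"
  shows "cesaro_mean (\<lambda>t. ar_filter r c (t - 1) * d t) \<longlonglongrightarrow> 0"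
proof -
  define a where "a k n = r^k * cesaro_mean (\<lambda>t. (if k < t - 1 then c (t - 1 - k) else 0) * d t) n"
    for k n
  have "(\<lambda>n. a k n) \<longlonglongrightarrow> 0" for k
    unfolding a_def by (intro tendsto_mult_right_zero cesaro_lagged_tendsto_zero lag) simp
  moreover have "norm (a k n) \<le> \<bar>r\<bar>^k * (C * D)" for k n
    unfolding a_def real_norm_def abs_mult[of "r^k"] power_abs
    by (intro mult_left_mono cesaro_lagged_bound c d) simp_all
  moreover have "summable (\<lambda>k. \<bar>r\<bar>^k * (C * D))"
    using r by (intro summable_mult2 summable_geometric) simp
  ultimately have "(\<lambda>n. \<Sum>k. a k n) \<longlonglongrightarrow> (\<Sum>k. (0::real))"
    using tannerys_theorem[of a "\<lambda>_. 0" sequentially "\<lambda>k. \<bar>r\<bar>^k * (C * D)"]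
    by (auto intro: always_eventually)
  moreover have "(\<Sum>k. a k n) = cesaro_mean (\<lambda>t. ar_filter r c (t - 1) * d t) n" for n
  proof -
    have "(\<Sum>k. a k n) = (\<Sum>k<n. a k n)"
      by (rule suminf_finite) (auto simp: a_def cesaro_mean_def intro!: sum.neutral split: if_splits)
    also have "\<dots> = (1 / real n) *
        (\<Sum>k<n. r^k * (\<Sum>t = 1..n. (if k < t - 1 then c (t - 1 - k) else 0) * d t))"
      by (simp add: a_def cesaro_mean_def sum_distrib_left algebra_simps)
    finally show ?thesis
      by (simp only: cesaro_mean_def sum_ar_filter_times_eq_lagged)
  qed
  ultimately show ?thesis by simp
qed

lemma linear_recursion_bounded:
  fixes m e :: "nat \<Rightarrow> real"
  assumes q: "\<bar>q\<bar> < 1" and rec: "\<And>t. m (Suc t) = q * m t + e (Suc t)" and "m 0 = 0"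
    and e: "\<And>t. t \<ge> 1 \<Longrightarrow> \<bar>e t\<bar> \<le> K"
  shows "\<bar>m t\<bar> \<le> K / (1 - \<bar>q\<bar>)"
proof (induction t)
  case 0
  then show ?case using \<open>m 0 = 0\<close> e[of 1] q by simp
next
  case (Suc t)
  have "\<bar>m (Suc t)\<bar> \<le> \<bar>q\<bar> * \<bar>m t\<bar> + K"
    using abs_triangle_ineq[of "q * m t" "e (Suc t)"] e[of "Suc t"] by (simp add: rec abs_mult)
  also have "\<dots> \<le> \<bar>q\<bar> * (K / (1 - \<bar>q\<bar>)) + K"
    using mult_left_mono[OF Suc.IH abs_ge_zero[of q]] by simp
  also have "\<dots> = K / (1 - \<bar>q\<bar>)"
    using q by (simp add: field_simps)
  finally show ?case .
qed

text \<open>Summing the recursion gives \<open>(1 - q) \<Sum>\<^sub>t\<^sub>=\<^sub>1\<^sup>n m\<^sub>t\<^sub>-\<^sub>1 = \<Sum>\<^sub>t\<^sub>=\<^sub>1\<^sup>n e\<^sub>t - m\<^sub>n\<close>,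
  and the boundary term \<open>m\<^sub>n\<close> vanishes after division by \<open>n\<close>.\<close>
lemma linear_recursion_cesaro:
  fixes m e :: "nat \<Rightarrow> real"
  assumes q: "\<bar>q\<bar> < 1" and rec: "\<And>t. m (Suc t) = q * m t + e (Suc t)" and "m 0 = 0"
    and bounded: "\<And>t. \<bar>m t\<bar> \<le> B"
    and lim: "cesaro_mean e \<longlonglongrightarrow> L"
  shows "cesaro_mean (\<lambda>t. m (t - 1)) \<longlonglongrightarrow> L / (1 - q)"
proof -
  have telescope: "(\<Sum>t = 1..n. m t) = (\<Sum>t = 1..n. m (t - 1)) + m n" for n
    by (induction n) (auto simp: \<open>m 0 = 0\<close>)
  have "(\<Sum>t = 1..n. m t) = (\<Sum>t = 1..n. q * m (t - 1) + e t)" for n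
  proof (rule sum.cong)
    fix t
    assume "t \<in> {1..n}"
    then obtain s where "t = Suc s" by (cases t) auto
    then show "m t = q * m (t - 1) + e t" using rec by simp
  qed simp
  then have "(\<Sum>t = 1..n. m t) = q * (\<Sum>t = 1..n. m (t - 1)) + (\<Sum>t = 1..n. e t)" for n
    by (simp add: sum.distrib sum_distrib_left)
  then have "(1 - q) * (\<Sum>t = 1..n. m (t - 1)) = (\<Sum>t = 1..n. e t) - m n" for n
    using telescope[of n] by (simp add: algebra_simps)
  then have "(\<Sum>t = 1..n. m (t - 1)) = ((\<Sum>t = 1..n. e t) - m n) / (1 - q)" for n
    using q by (simp add: field_simps)
  then have avg: "cesaro_mean (\<lambda>t. m (t - 1)) = (\<lambda>n. (cesaro_mean e n - m n / real n) / (1 - q))"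
    unfolding cesaro_mean_def
    by (intro ext) (simp add: diff_divide_distrib[symmetric] divide_divide_eq_left mult.commute)
  have "(\<lambda>n. m n / real n) \<longlonglongrightarrow> 0"
  proof (rule Lim_null_comparison)
    show "\<forall>\<^sub>F n in sequentially. norm (m n / real n) \<le> B / real n"
      using bounded by (intro always_eventually allI) (simp add: divide_right_mono)
  qed (rule lim_const_over_n)
  then have "(\<lambda>n. (cesaro_mean e n - m n / real n) / (1 - q)) \<longlonglongrightarrow> (L - 0) / (1 - q)"
    using q by (intro tendsto_intros lim) auto
  then show ?thesis
    unfolding avg by simp
qed

lemma cesaro_outer_inner:
  fixes f g :: "nat \<Rightarrow> real^'m" and L :: "real^'m^'m" and u v :: "real^'m"
  assumes lim: "(\<lambda>n. (1 / real n) *\<^sub>R (\<Sum>t = 1..n. outer (f t) (g t))) \<longlonglongrightarrow> L"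
  shows "cesaro_mean (\<lambda>t. (f t \<bullet> u) * (g t \<bullet> v)) \<longlonglongrightarrow> u \<bullet> (L *v v)"
proof -
  have entry: "(\<lambda>n. (1 / real n) * (\<Sum>t = 1..n. f t $ i * g t $ j)) \<longlonglongrightarrow> L $ i $ j" for i j
    using tendsto_vec_nth[OF tendsto_vec_nth[OF lim], of i j] by (simp add: outer_def)
  have "(1 / real n) * (\<Sum>t = 1..n. (f t \<bullet> u) * (g t \<bullet> v))
      = (\<Sum>i\<in>UNIV. \<Sum>j\<in>UNIV. u$i * v$j * ((1 / real n) * (\<Sum>t = 1..n. f t $ i * g t $ j)))" for n
  proof -
    have "(f t \<bullet> u) * (g t \<bullet> v) = (\<Sum>i\<in>UNIV. \<Sum>j\<in>UNIV. u$i * v$j * (f t $ i * g t $ j))" for t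
      unfolding inner_vec_def sum_product by (simp add: algebra_simps)
    then have "(\<Sum>t = 1..n. (f t \<bullet> u) * (g t \<bullet> v))
        = (\<Sum>t = 1..n. \<Sum>i\<in>UNIV. \<Sum>j\<in>UNIV. u$i * v$j * (f t $ i * g t $ j))"
      by simp
    also have "\<dots> = (\<Sum>i\<in>UNIV. \<Sum>j\<in>UNIV. \<Sum>t = 1..n. u$i * v$j * (f t $ i * g t $ j))"
      by (subst sum.swap) (intro sum.cong refl sum.swap)
    finally have "(\<Sum>t = 1..n. (f t \<bullet> u) * (g t \<bullet> v))
        = (\<Sum>i\<in>UNIV. \<Sum>j\<in>UNIV. \<Sum>t = 1..n. u$i * v$j * (f t $ i * g t $ j))" .
    then show ?thesis
      by (simp add: sum_distrib_left algebra_simps)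
  qed
  moreover have "u \<bullet> (L *v v) = (\<Sum>i\<in>UNIV. \<Sum>j\<in>UNIV. u$i * v$j * L $ i $ j)"
    unfolding inner_vec_def matrix_vector_mult_def by (simp add: sum_distrib_left algebra_simps)
  ultimately show ?thesis
    unfolding cesaro_mean_def by (simp only:) (intro tendsto_sum tendsto_mult_left entry)
qed

lemma cesaro_outer_symmetric:
  fixes f :: "nat \<Rightarrow> real^'m" and L :: "real^'m^'m"
  assumes "(\<lambda>n. (1 / real n) *\<^sub>R (\<Sum>t = 1..n. outer (f t) (f t))) \<longlonglongrightarrow> L"
  shows "u \<bullet> (L *v v) = v \<bullet> (L *v u)"
proof (rule LIMSEQ_unique)
  show "cesaro_mean (\<lambda>t. (f t \<bullet> u) * (f t \<bullet> v)) \<longlonglongrightarrow> u \<bullet> (L *v v)"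
    by (rule cesaro_outer_inner[OF assms])
  show "cesaro_mean (\<lambda>t. (f t \<bullet> u) * (f t \<bullet> v)) \<longlonglongrightarrow> v \<bullet> (L *v u)"
    using cesaro_outer_inner[OF assms, of v u] by (simp add: mult.commute)
qed

lemma sum_abs_linear_bound_if_cesaro_square_convergent:
  fixes d :: "nat \<Rightarrow> real"
  assumes "convergent (cesaro_mean (\<lambda>t. (d t)^2))"
  obtains D where "\<And>n. (\<Sum>t = 1..n. \<bar>d t\<bar>) \<le> D * real n"
proof -
  obtain Q where Q: "\<And>n. \<bar>(1 / real n) * (\<Sum>t = 1..n. (d t)^2)\<bar> \<le> Q"
    using convergent_imp_Bseq[OF assms] unfolding Bseq_def real_norm_def cesaro_mean_def by blast
  have "(\<Sum>t = 1..n. \<bar>d t\<bar>) \<le> ((1 + Q) / 2) * real n" for n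
  proof (cases "n = 0")
    case False
    have "(\<Sum>t = 1..n. \<bar>d t\<bar>) \<le> (\<Sum>t = 1..n. (1 + (d t)^2) / 2)"
    proof (rule sum_mono)
      fix t
      show "\<bar>d t\<bar> \<le> (1 + (d t)^2) / 2"
        using sum_squares_bound[of "\<bar>d t\<bar>" 1] by simp
    qed
    also have "\<dots> = (real n + real n * ((1 / real n) * (\<Sum>t = 1..n. (d t)^2))) / 2"
      using False by (simp add: sum.distrib sum_divide_distrib[symmetric])
    also have "\<dots> \<le> (real n + real n * Q) / 2"
      using abs_le_D1[OF Q[of n]] by (intro divide_right_mono add_left_mono mult_left_mono) auto
    finally show ?thesis
      by (simp add: field_simps)
  qed simp
  then show thesis ..
qed

section \<open>Square-integrable random variables\<close>

definition square_integrable :: "'a measure \<Rightarrow> ('a \<Rightarrow> real) \<Rightarrow> bool" where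
  "square_integrable M f \<longleftrightarrow> f \<in> borel_measurable M \<and> integrable M (\<lambda>x. (f x)^2)"

lemma (in finite_measure) integrable_if_square_integrable:
  "square_integrable M f \<Longrightarrow> integrable M f"
  unfolding square_integrable_def by (auto intro: square_integrable_imp_integrable)

lemma integrable_mult_if_square_integrable:
  assumes "square_integrable M f" "square_integrable M g"
  shows "integrable M (\<lambda>x. f x * g x)"
proof (rule Bochner_Integration.integrable_bound)
  show "integrable M (\<lambda>x. (f x)^2 + (g x)^2)"
    using assms by (simp add: square_integrable_def)
  show "(\<lambda>x. f x * g x) \<in> borel_measurable M"
    using assms by (simp add: square_integrable_def borel_measurable_times)
  show "AE x in M. norm (f x * g x) \<le> norm ((f x)^2 + (g x)^2)"
  proof (rule AE_I2)
    fix x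
    have "0 \<le> \<bar>f x\<bar> * \<bar>g x\<bar>" by simp
    moreover have "2 * (\<bar>f x\<bar> * \<bar>g x\<bar>) \<le> (f x)^2 + (g x)^2"
      using sum_squares_bound[of "\<bar>f x\<bar>" "\<bar>g x\<bar>"] by (simp add: mult.assoc)
    ultimately have "\<bar>f x\<bar> * \<bar>g x\<bar> \<le> (f x)^2 + (g x)^2"
      by linarith
    then show "norm (f x * g x) \<le> norm ((f x)^2 + (g x)^2)"
      by (simp add: abs_mult)
  qed
qed

lemma square_integrable_add:
  assumes f: "square_integrable M f" and g: "square_integrable M g"
  shows "square_integrable M (\<lambda>x. f x + g x)"
  unfolding square_integrable_def
proof
  show "(\<lambda>x. f x + g x) \<in> borel_measurable M"
    using assms by (simp add: square_integrable_def borel_measurable_add)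
  have "integrable M (\<lambda>x. (f x)^2 + (g x)^2 + 2 * (f x * g x))"
    using assms integrable_mult_if_square_integrable[OF f g] by (simp add: square_integrable_def)
  then show "integrable M (\<lambda>x. (f x + g x)^2)"
    by (simp add: power2_sum algebra_simps)
qed

lemma square_integrable_scaled: "square_integrable M f \<Longrightarrow> square_integrable M (\<lambda>x. a * f x)"
  unfolding square_integrable_def by (auto simp: power_mult_distrib)

lemma (in finite_measure) square_integrable_const: "square_integrable M (\<lambda>x. a)"
  unfolding square_integrable_def by auto

lemma (in prob_space) expectation_affine_square:
  assumes U: "square_integrable M U" and V: "square_integrable M V"
  shows "expectation (\<lambda>x. (a * U x + b * V x + c)^2)
       = a^2 * expectation (\<lambda>x. (U x)^2) + b^2 * expectation (\<lambda>x. (V x)^2) + c^2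
         + 2*a*b * expectation (\<lambda>x. U x * V x) + 2*a*c * expectation U + 2*b*c * expectation V"
proof -
  have "expectation (\<lambda>x. (a * U x + b * V x + c)^2)
      = expectation (\<lambda>x. ((a^2 * (U x)^2 + b^2 * (V x)^2) + (2*a*b * (U x * V x) + c^2))
                         + (2*a*c * U x + 2*b*c * V x))"
    by (rule Bochner_Integration.integral_cong) (auto simp: power2_eq_square algebra_simps)
  also have "\<dots> = a^2 * expectation (\<lambda>x. (U x)^2) + b^2 * expectation (\<lambda>x. (V x)^2) + c^2
         + 2*a*b * expectation (\<lambda>x. U x * V x) + 2*a*c * expectation U + 2*b*c * expectation V"
    using assms integrable_mult_if_square_integrable[OF U V]
    by (simp add: integrable_if_square_integrable square_integrable_def prob_space)
  finally show ?thesis .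
qed

section \<open>The Gaussian AR(1) process\<close>

lemma ar_proc_0_fun: "ar_proc \<rho> \<beta> z eps 0 = (\<lambda>\<omega>. 0)"
  by (rule ext) simp

lemma ar_proc_Suc_fun:
  "ar_proc \<rho> \<beta> z eps (Suc t) = (\<lambda>\<omega>. \<rho> * ar_proc \<rho> \<beta> z eps t \<omega> + eps (Suc t) \<omega> + z (Suc t) \<bullet> \<beta>)"
  by (rule ext) simp

locale gaussian_white_noise = prob_space M for M :: "'a measure" +
  fixes eps :: "nat \<Rightarrow> 'a \<Rightarrow> real" and \<sigma>0 :: real
  assumes indep_noise: "indep_vars (\<lambda>_. borel) eps {1..}"
    and normal_noise: "\<And>t. t \<ge> 1 \<Longrightarrow> distributed M lborel (eps t) (normal_density 0 \<sigma>0)"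
    and \<sigma>0_pos: "\<sigma>0 > 0"
begin

lemma noise_square_integrable:
  assumes "t \<ge> 1"
  shows "square_integrable M (eps t)"
proof -
  have "integrable lborel (\<lambda>x. normal_density 0 \<sigma>0 x * x^2)"
    using integrable_normal_moment[where \<mu>=0 and \<sigma>=\<sigma>0 and k=2] \<sigma>0_pos by simp
  then have "integrable M (\<lambda>x. (eps t x)^2)"
    using distributed_integrable[OF normal_noise[OF assms], of "\<lambda>x. x^2"] by simp
  then show ?thesis
    using distributed_measurable[OF normal_noise[OF assms]] by (simp add: square_integrable_def)
qed

lemma noise_mean: "t \<ge> 1 \<Longrightarrow> expectation (eps t) = 0"
  by (rule normal_distributed_expectation[OF \<sigma>0_pos normal_noise])

lemma noise_second_moment: "t \<ge> 1 \<Longrightarrow> expectation (\<lambda>x. (eps t x)^2) = \<sigma>0^2"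
  using normal_distributed_variance[OF \<sigma>0_pos normal_noise] noise_mean by simp

lemma noise_uncorrelated:
  assumes "s \<ge> 1" "t \<ge> 1" "s \<noteq> t"
  shows "expectation (\<lambda>x. eps s x * eps t x) = 0"
proof -
  have "indep_var (Pi\<^sub>M {s} (\<lambda>_. borel)) (\<lambda>\<omega>. restrict (\<lambda>i. eps i \<omega>) {s})
                  (Pi\<^sub>M {t} (\<lambda>_. borel)) (\<lambda>\<omega>. restrict (\<lambda>i. eps i \<omega>) {t})"
    using assms by (intro indep_var_restrict[OF indep_noise]) auto
  from indep_var_compose[OF this measurable_component_singleton[of s "{s}" "\<lambda>_. borel"]
      measurable_component_singleton[of t "{t}" "\<lambda>_. borel"]]
  have "indep_var borel (eps s) borel (eps t)"
    by (simp add: comp_def)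
  moreover have "integrable M (eps s)" "integrable M (eps t)"
    using assms by (simp_all add: integrable_if_square_integrable noise_square_integrable)
  ultimately have "expectation (\<lambda>x. eps s x * eps t x) = expectation (eps s) * expectation (eps t)"
    by (rule indep_var_lebesgue_integral)
  then show ?thesis
    using noise_mean assms by simp
qed

lemma ar_proc_square_integrable: "square_integrable M (ar_proc \<rho> \<beta> z eps t)"
proof (induction t)
  case 0
  then show ?case by (simp add: ar_proc_0_fun square_integrable_const)
next
  case (Suc t)
  then show ?case
    unfolding ar_proc_Suc_fun
    by (intro square_integrable_add square_integrable_scaled square_integrable_const
        noise_square_integrable) auto
qed

lemma ar_proc_mean: "expectation (ar_proc \<rho> \<beta> z eps t) = ar_filter \<rho> (\<lambda>s. z s \<bullet> \<beta>) t"
proof (induction t)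
  case 0
  then show ?case by (simp add: ar_proc_0_fun)
next
  case (Suc t)
  have "expectation (ar_proc \<rho> \<beta> z eps (Suc t))
      = \<rho> * expectation (ar_proc \<rho> \<beta> z eps t) + expectation (eps (Suc t)) + z (Suc t) \<bullet> \<beta>"
    unfolding ar_proc_Suc_fun
    using integrable_if_square_integrable[OF ar_proc_square_integrable, of \<rho> \<beta> z t]
      integrable_if_square_integrable[OF noise_square_integrable, of "Suc t"]
    by (simp add: prob_space)
  also have "\<dots> = ar_filter \<rho> (\<lambda>s. z s \<bullet> \<beta>) (Suc t)"
    using Suc noise_mean[of "Suc t"] by simp
  finally show ?case .
qed

lemma noise_ar_proc_uncorrelated:
  "t < s \<Longrightarrow> expectation (\<lambda>x. eps s x * ar_proc \<rho> \<beta> z eps t x) = 0"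
proof (induction t)
  case 0
  then show ?case by simp
next
  case (Suc t)
  have s: "square_integrable M (eps s)" "square_integrable M (eps (Suc t))"
    using Suc.prems by (auto intro: noise_square_integrable)
  have "expectation (\<lambda>x. eps s x * ar_proc \<rho> \<beta> z eps (Suc t) x)
      = expectation (\<lambda>x. \<rho> * (eps s x * ar_proc \<rho> \<beta> z eps t x) + eps s x * eps (Suc t) x
                         + z (Suc t) \<bullet> \<beta> * eps s x)"
    by (rule Bochner_Integration.integral_cong) (auto simp: algebra_simps)
  also have "\<dots> = \<rho> * expectation (\<lambda>x. eps s x * ar_proc \<rho> \<beta> z eps t x)
      + expectation (\<lambda>x. eps s x * eps (Suc t) x) + z (Suc t) \<bullet> \<beta> * expectation (eps s)"
    using integrable_mult_if_square_integrable[OF s(1) ar_proc_square_integrable, of \<rho> \<beta> z t]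
      integrable_mult_if_square_integrable[OF s] integrable_if_square_integrable[OF s(1)]
    by simp
  also have "\<dots> = 0"
    using Suc noise_uncorrelated[of s "Suc t"] noise_mean[of s] by simp
  finally show ?case .
qed

lemma ar_proc_second_moment_Suc:
  "expectation (\<lambda>x. (ar_proc \<rho> \<beta> z eps (Suc t) x)^2)
     = \<rho>^2 * expectation (\<lambda>x. (ar_proc \<rho> \<beta> z eps t x)^2)
       + (\<sigma>0^2 + (z (Suc t) \<bullet> \<beta>)^2 + 2 * \<rho> * (z (Suc t) \<bullet> \<beta>) * ar_filter \<rho> (\<lambda>s. z s \<bullet> \<beta>) t)"
proof -
  have noise: "square_integrable M (eps (Suc t))"
    by (simp add: noise_square_integrable)
  have "expectation (\<lambda>x. ar_proc \<rho> \<beta> z eps t x * eps (Suc t) x) = 0"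
    using noise_ar_proc_uncorrelated[of t "Suc t"] by (simp add: mult.commute)
  then show ?thesis
    unfolding ar_proc_Suc_fun
    using expectation_affine_square[OF ar_proc_square_integrable[of \<rho> \<beta> z t] noise,
        of \<rho> 1 "z (Suc t) \<bullet> \<beta>"]
      noise_second_moment[of "Suc t"] noise_mean[of "Suc t"] ar_proc_mean[of \<rho> \<beta> z t]
    by simp
qed

lemma expected_residual_square:
  assumes "t \<ge> 1"
  shows "expectation (\<lambda>x. (eps t x + a * ar_proc \<rho> \<beta> z eps (t - 1) x + d)^2)
       = \<sigma>0^2 + a^2 * expectation (\<lambda>x. (ar_proc \<rho> \<beta> z eps (t - 1) x)^2) + d^2
         + 2 * a * d * ar_filter \<rho> (\<lambda>s. z s \<bullet> \<beta>) (t - 1)"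
proof -
  have "expectation (\<lambda>x. eps t x * ar_proc \<rho> \<beta> z eps (t - 1) x) = 0"
    using noise_ar_proc_uncorrelated[of "t - 1" t] assms by simp
  then show ?thesis
    using expectation_affine_square[OF noise_square_integrable[OF assms] ar_proc_square_integrable,
        of 1 a \<rho> \<beta> z "t - 1" d]
      noise_second_moment[OF assms] noise_mean[OF assms] ar_proc_mean[of \<rho> \<beta> z "t - 1"]
    by simp
qed

lemma ar_proc_second_moment_bounded:
  assumes \<rho>: "\<bar>\<rho>\<bar> < 1" and c: "\<And>t. t \<ge> 1 \<Longrightarrow> \<bar>z t \<bullet> \<beta>\<bar> \<le> C"
  obtains K where "\<And>t. \<bar>expectation (\<lambda>\<omega>. (ar_proc \<rho> \<beta> z eps t \<omega>)^2)\<bar> \<le> K"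
proof -
  define \<mu> where "\<mu> = ar_filter \<rho> (\<lambda>s. z s \<bullet> \<beta>)"
  define e where "e t = \<sigma>0^2 + (z t \<bullet> \<beta>)^2 + 2 * \<rho> * (z t \<bullet> \<beta>) * \<mu> (t - 1)" for t
  have "0 \<le> C"
    using c[of 1] by simp
  have \<mu>_bound: "\<bar>\<mu> t\<bar> \<le> C / (1 - \<bar>\<rho>\<bar>)" for t
    by (rule linear_recursion_bounded[where e = "\<lambda>s. z s \<bullet> \<beta>"]) (use \<rho> c in \<open>auto simp: \<mu>_def\<close>)
  have "\<bar>e t\<bar> \<le> \<sigma>0^2 + C^2 + 2 * \<bar>\<rho>\<bar> * C * (C / (1 - \<bar>\<rho>\<bar>))" if "t \<ge> 1" for t
  proof -
    have "(z t \<bullet> \<beta>)^2 \<le> C^2"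
      using c[OF that] \<open>0 \<le> C\<close> by (metis abs_le_square_iff abs_of_nonneg)
    moreover have "\<bar>2 * \<rho> * (z t \<bullet> \<beta>) * \<mu> (t - 1)\<bar> \<le> 2 * \<bar>\<rho>\<bar> * C * (C / (1 - \<bar>\<rho>\<bar>))"
      unfolding abs_mult using c[OF that] \<mu>_bound[of "t - 1"]
      by (intro mult_mono mult_nonneg_nonneg) auto
    moreover have "\<bar>e t\<bar> \<le> \<sigma>0^2 + (z t \<bullet> \<beta>)^2 + \<bar>2 * \<rho> * (z t \<bullet> \<beta>) * \<mu> (t - 1)\<bar>"
      unfolding e_def
      using abs_triangle_ineq[of "\<sigma>0^2 + (z t \<bullet> \<beta>)^2" "2 * \<rho> * (z t \<bullet> \<beta>) * \<mu> (t - 1)"]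
      by simp
    ultimately show ?thesis
      by linarith
  qed
  then have "\<bar>expectation (\<lambda>\<omega>. (ar_proc \<rho> \<beta> z eps t \<omega>)^2)\<bar>
      \<le> (\<sigma>0^2 + C^2 + 2 * \<bar>\<rho>\<bar> * C * (C / (1 - \<bar>\<rho>\<bar>))) / (1 - \<bar>\<rho>^2\<bar>)" for t
    using \<rho> ar_proc_second_moment_Suc
    by (intro linear_recursion_bounded[where e = e])
      (simp_all add: abs_square_less_1 e_def \<mu>_def ar_proc_0_fun)
  then show thesis ..
qed

lemma cesaro_ar_proc_second_moment:
  assumes \<rho>: "\<bar>\<rho>\<bar> < 1" and c: "\<And>t. t \<ge> 1 \<Longrightarrow> \<bar>z t \<bullet> \<beta>\<bar> \<le> C"
    and square: "cesaro_mean (\<lambda>t. (z t \<bullet> \<beta>)^2) \<longlonglongrightarrow> B"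
    and lag: "\<And>k. k \<ge> 1 \<Longrightarrow> cesaro_mean (\<lambda>s. (z s \<bullet> \<beta>) * (z (s + k) \<bullet> \<beta>)) \<longlonglongrightarrow> 0"
  shows "cesaro_mean (\<lambda>t. expectation (\<lambda>\<omega>. (ar_proc \<rho> \<beta> z eps (t - 1) \<omega>)^2))
           \<longlonglongrightarrow> (\<sigma>0^2 + B) / (1 - \<rho>^2)"
proof -
  define \<mu> where "\<mu> = ar_filter \<rho> (\<lambda>s. z s \<bullet> \<beta>)"
  define e where "e t = \<sigma>0^2 + (z t \<bullet> \<beta>)^2 + 2 * \<rho> * (\<mu> (t - 1) * (z t \<bullet> \<beta>))" for t
  obtain K where K: "\<And>t. \<bar>expectation (\<lambda>\<omega>. (ar_proc \<rho> \<beta> z eps t \<omega>)^2)\<bar> \<le> K"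
    using ar_proc_second_moment_bounded[where \<rho> = \<rho> and z = z and \<beta> = \<beta> and C = C, OF \<rho> c]
    by blast
  have "cesaro_mean (\<lambda>t. \<mu> (t - 1) * (z t \<bullet> \<beta>)) \<longlonglongrightarrow> 0"
    unfolding \<mu>_def
  proof (rule cesaro_ar_filter_cross_tendsto_zero[OF \<rho> c _ lag])
    show "(\<Sum>t = 1..n. \<bar>z t \<bullet> \<beta>\<bar>) \<le> C * real n" for n
      using sum_bounded_above[of "{1..n}" "\<lambda>t. \<bar>z t \<bullet> \<beta>\<bar>" C] c by (simp add: mult.commute)
  qed
  then have "cesaro_mean e \<longlonglongrightarrow> \<sigma>0^2 + B + 2 * \<rho> * 0"
    unfolding e_def
    by (intro cesaro_mean_tendsto_add cesaro_mean_tendsto_mult_left cesaro_mean_tendsto_const square)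
  then show ?thesis
    using \<rho> ar_proc_second_moment_Suc K
    by (intro linear_recursion_cesaro[where e = e])
      (simp_all add: abs_square_less_1 e_def \<mu>_def ar_proc_0_fun algebra_simps)
qed

end

section \<open>The Kullback--Leibler divergence rate\<close>

lemma ln_normal_density_ratio:
  assumes "\<sigma>0 > 0" "\<sigma> > 0"
  shows "ln (normal_density 0 \<sigma>0 x) - ln (normal_density 0 \<sigma> y)
       = ln (\<sigma> / \<sigma>0) + y^2 / (2 * \<sigma>^2) - x^2 / (2 * \<sigma>0^2)"
proof -
  have "ln (normal_density 0 u v) = - ln (sqrt (2 * pi)) - ln u - v^2 / (2 * u^2)" if "u > 0" for u v
    using that by (simp add: normal_density_def ln_mult ln_div real_sqrt_mult)
  then show ?thesis
    using assms by (simp add: ln_div)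
qed

lemma ar_density_along_ar_proc:
  "ar_density \<rho> \<beta> \<sigma> z n (\<lambda>t. ar_proc \<rho>0 \<beta>0 z eps t \<omega>)
     = (\<Prod>t = 1..n. normal_density 0 \<sigma>
          (eps t \<omega> + (\<rho>0 - \<rho>) * ar_proc \<rho>0 \<beta>0 z eps (t - 1) \<omega> + z t \<bullet> (\<beta>0 - \<beta>)))"
  unfolding ar_density_def
proof (rule prod.cong)
  fix t
  assume "t \<in> {1..n}"
  then obtain s where "t = Suc s"
    by (cases t) auto
  then show "normal_density 0 \<sigma> (ar_proc \<rho>0 \<beta>0 z eps t \<omega> - \<rho> * ar_proc \<rho>0 \<beta>0 z eps (t - 1) \<omega> - z t \<bullet> \<beta>)
      = normal_density 0 \<sigma> (eps t \<omega> + (\<rho>0 - \<rho>) * ar_proc \<rho>0 \<beta>0 z eps (t - 1) \<omega> + z t \<bullet> (\<beta>0 - \<beta>))"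
    by (simp add: inner_diff_right algebra_simps)
qed simp

lemma ln_ar_density_ratio_along_ar_proc:
  assumes "\<sigma>0 > 0" "\<sigma> > 0"
  shows "ln (ar_density \<rho>0 \<beta>0 \<sigma>0 z n (\<lambda>t. ar_proc \<rho>0 \<beta>0 z eps t \<omega>)
            / ar_density \<rho> \<beta> \<sigma> z n (\<lambda>t. ar_proc \<rho>0 \<beta>0 z eps t \<omega>))
       = (\<Sum>t = 1..n. ln (\<sigma> / \<sigma>0)
           + (eps t \<omega> + (\<rho>0 - \<rho>) * ar_proc \<rho>0 \<beta>0 z eps (t - 1) \<omega> + z t \<bullet> (\<beta>0 - \<beta>))^2 / (2 * \<sigma>^2)
           - (eps t \<omega>)^2 / (2 * \<sigma>0^2))"
proof -
  let ?R = "\<lambda>t. eps t \<omega> + (\<rho>0 - \<rho>) * ar_proc \<rho>0 \<beta>0 z eps (t - 1) \<omega> + z t \<bullet> (\<beta>0 - \<beta>)"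
  have "ar_density \<rho>0 \<beta>0 \<sigma>0 z n (\<lambda>t. ar_proc \<rho>0 \<beta>0 z eps t \<omega>)
      = (\<Prod>t = 1..n. normal_density 0 \<sigma>0 (eps t \<omega>))"
    using ar_density_along_ar_proc[of \<rho>0 \<beta>0 \<sigma>0 z n \<rho>0 \<beta>0 eps \<omega>] by simp
  moreover have "0 < (\<Prod>t = 1..n. normal_density 0 \<sigma>0 (eps t \<omega>))"
    "0 < (\<Prod>t = 1..n. normal_density 0 \<sigma> (?R t))"
    using assms by (auto intro!: prod_pos normal_density_pos)
  ultimately have "ln (ar_density \<rho>0 \<beta>0 \<sigma>0 z n (\<lambda>t. ar_proc \<rho>0 \<beta>0 z eps t \<omega>)
            / ar_density \<rho> \<beta> \<sigma> z n (\<lambda>t. ar_proc \<rho>0 \<beta>0 z eps t \<omega>))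
      = (\<Sum>t = 1..n. ln (normal_density 0 \<sigma>0 (eps t \<omega>)) - ln (normal_density 0 \<sigma> (?R t)))"
    using assms
    by (simp add: ar_density_along_ar_proc ln_div ln_prod normal_density_pos less_imp_neq[symmetric]
        sum_subtractf)
  then show ?thesis
    using ln_normal_density_ratio[OF assms] by simp
qed

context gaussian_white_noise
begin

lemma has_bochner_integral_log_likelihood_increment:
  assumes "t \<ge> 1" "\<sigma> > 0"
  shows "has_bochner_integral M
      (\<lambda>\<omega>. ln (\<sigma> / \<sigma>0) + (eps t \<omega> + a * ar_proc \<rho> \<beta> z eps (t - 1) \<omega> + d)^2 / (2 * \<sigma>^2)
              - (eps t \<omega>)^2 / (2 * \<sigma>0^2))
      (ln (\<sigma> / \<sigma>0) - 1 / 2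
        + (\<sigma>0^2 + a^2 * expectation (\<lambda>\<omega>. (ar_proc \<rho> \<beta> z eps (t - 1) \<omega>)^2) + d^2
           + 2 * a * d * ar_filter \<rho> (\<lambda>s. z s \<bullet> \<beta>) (t - 1)) / (2 * \<sigma>^2))"
proof -
  have noise: "square_integrable M (eps t)"
    using assms(1) by (rule noise_square_integrable)
  moreover have "square_integrable M (\<lambda>\<omega>. eps t \<omega> + a * ar_proc \<rho> \<beta> z eps (t - 1) \<omega> + d)"
    by (intro square_integrable_add noise square_integrable_scaled ar_proc_square_integrable
        square_integrable_const)
  ultimately show ?thesis
    using expected_residual_square[OF assms(1), of a \<rho> \<beta> z d] noise_second_moment[OF assms(1)]
      \<sigma>0_pos
    by (simp add: has_bochner_integral_iff square_integrable_def prob_space add_divide_distrib)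
qed

lemma expected_ln_ar_density_ratio:
  assumes "\<sigma> > 0"
  shows "expectation (\<lambda>\<omega>. ln (ar_density \<rho>0 \<beta>0 \<sigma>0 z n (\<lambda>t. ar_proc \<rho>0 \<beta>0 z eps t \<omega>)
                               / ar_density \<rho> \<beta> \<sigma> z n (\<lambda>t. ar_proc \<rho>0 \<beta>0 z eps t \<omega>)))
       = (\<Sum>t = 1..n. ln (\<sigma> / \<sigma>0) - 1 / 2
           + (\<sigma>0^2 + (\<rho>0 - \<rho>)^2 * expectation (\<lambda>\<omega>. (ar_proc \<rho>0 \<beta>0 z eps (t - 1) \<omega>)^2)
              + (z t \<bullet> (\<beta>0 - \<beta>))^2
              + 2 * (\<rho>0 - \<rho>) * (z t \<bullet> (\<beta>0 - \<beta>)) * ar_filter \<rho>0 (\<lambda>s. z s \<bullet> \<beta>0) (t - 1))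
             / (2 * \<sigma>^2))"
  unfolding ln_ar_density_ratio_along_ar_proc[OF \<sigma>0_pos assms]
  by (intro has_bochner_integral_integral_eq has_bochner_integral_sum
      has_bochner_integral_log_likelihood_increment assms) simp

lemma kl_rate_tendsto:
  assumes \<rho>0: "\<bar>\<rho>0\<bar> < 1" and "\<sigma> > 0"
    and c: "\<And>t. t \<ge> 1 \<Longrightarrow> \<bar>z t \<bullet> \<beta>0\<bar> \<le> C"
    and cc: "cesaro_mean (\<lambda>t. (z t \<bullet> \<beta>0)^2) \<longlonglongrightarrow> B"
    and cc_lag: "\<And>k. k \<ge> 1 \<Longrightarrow> cesaro_mean (\<lambda>s. (z s \<bullet> \<beta>0) * (z (s + k) \<bullet> \<beta>0)) \<longlonglongrightarrow> 0"
    and dd: "cesaro_mean (\<lambda>t. (z t \<bullet> (\<beta>0 - \<beta>))^2) \<longlonglongrightarrow> D"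
    and cd_lag: "\<And>k. k \<ge> 1 \<Longrightarrow>
      cesaro_mean (\<lambda>s. (z s \<bullet> \<beta>0) * (z (s + k) \<bullet> (\<beta>0 - \<beta>))) \<longlonglongrightarrow> 0"
  shows "(\<lambda>n. (1 / real n) *
            expectation (\<lambda>\<omega>. ln (ar_density \<rho>0 \<beta>0 \<sigma>0 z n (\<lambda>t. ar_proc \<rho>0 \<beta>0 z eps t \<omega>)
                                  / ar_density \<rho> \<beta> \<sigma> z n (\<lambda>t. ar_proc \<rho>0 \<beta>0 z eps t \<omega>))))
         \<longlonglongrightarrow> ln (\<sigma> / \<sigma>0) - 1 / 2
             + (\<sigma>0^2 + (\<rho>0 - \<rho>)^2 * ((\<sigma>0^2 + B) / (1 - \<rho>0^2)) + D) / (2 * \<sigma>^2)"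
proof -
  define m where "m t = expectation (\<lambda>\<omega>. (ar_proc \<rho>0 \<beta>0 z eps t \<omega>)^2)" for t
  define \<mu> where "\<mu> = ar_filter \<rho>0 (\<lambda>s. z s \<bullet> \<beta>0)"
  define d where "d t = z t \<bullet> (\<beta>0 - \<beta>)" for t
  define k0 where "k0 = ln (\<sigma> / \<sigma>0) - 1 / 2 + \<sigma>0^2 / (2 * \<sigma>^2)"
  have summand: "ln (\<sigma> / \<sigma>0) - 1 / 2 + (\<sigma>0^2 + a^2 * x + y^2 + 2 * a * y * u) / (2 * \<sigma>^2)
      = k0 + a^2 / (2 * \<sigma>^2) * x + 1 / (2 * \<sigma>^2) * y^2 + a / \<sigma>^2 * (u * y)" for a x y u
    using \<open>\<sigma> > 0\<close> by (simp add: k0_def field_simps)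
  obtain D' where "\<And>n. (\<Sum>t = 1..n. \<bar>d t\<bar>) \<le> D' * real n"
    using sum_abs_linear_bound_if_cesaro_square_convergent[OF convergentI[OF dd]]
    unfolding d_def by blast
  then have "cesaro_mean (\<lambda>t. \<mu> (t - 1) * d t) \<longlonglongrightarrow> 0"
    unfolding \<mu>_def d_def by (intro cesaro_ar_filter_cross_tendsto_zero[OF \<rho>0 c] cd_lag) auto
  then have "cesaro_mean (\<lambda>t. k0 + (\<rho>0 - \<rho>)^2 / (2 * \<sigma>^2) * m (t - 1) + 1 / (2 * \<sigma>^2) * (d t)^2
        + (\<rho>0 - \<rho>) / \<sigma>^2 * (\<mu> (t - 1) * d t))
      \<longlonglongrightarrow> k0 + (\<rho>0 - \<rho>)^2 / (2 * \<sigma>^2) * ((\<sigma>0^2 + B) / (1 - \<rho>0^2)) + 1 / (2 * \<sigma>^2) * D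
          + (\<rho>0 - \<rho>) / \<sigma>^2 * 0"
    unfolding m_def d_def
    by (intro cesaro_mean_tendsto_add cesaro_mean_tendsto_mult_left cesaro_mean_tendsto_const
        cesaro_ar_proc_second_moment[OF \<rho>0 c cc cc_lag] dd)
  moreover have "(\<lambda>n. (1 / real n) *
            expectation (\<lambda>\<omega>. ln (ar_density \<rho>0 \<beta>0 \<sigma>0 z n (\<lambda>t. ar_proc \<rho>0 \<beta>0 z eps t \<omega>)
                                  / ar_density \<rho> \<beta> \<sigma> z n (\<lambda>t. ar_proc \<rho>0 \<beta>0 z eps t \<omega>))))
      = cesaro_mean (\<lambda>t. k0 + (\<rho>0 - \<rho>)^2 / (2 * \<sigma>^2) * m (t - 1) + 1 / (2 * \<sigma>^2) * (d t)^2
        + (\<rho>0 - \<rho>) / \<sigma>^2 * (\<mu> (t - 1) * d t))"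
    unfolding cesaro_mean_def expected_ln_ar_density_ratio[OF \<open>\<sigma> > 0\<close>] summand m_def \<mu>_def d_def ..
  moreover have "k0 + (\<rho>0 - \<rho>)^2 / (2 * \<sigma>^2) * ((\<sigma>0^2 + B) / (1 - \<rho>0^2)) + 1 / (2 * \<sigma>^2) * D
          + (\<rho>0 - \<rho>) / \<sigma>^2 * 0
      = ln (\<sigma> / \<sigma>0) - 1 / 2 + (\<sigma>0^2 + (\<rho>0 - \<rho>)^2 * ((\<sigma>0^2 + B) / (1 - \<rho>0^2)) + D) / (2 * \<sigma>^2)"
    by (simp add: k0_def add_divide_distrib)
  ultimately show ?thesis
    by simp
qed

end

lemma kl_rate_closed_form:
  fixes \<Sigma> :: "real^'m^'m" and \<beta>0 \<beta> :: "real^'m"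
  assumes "\<sigma> > 0" "\<sigma>0 > 0" "\<bar>\<rho>0\<bar> < 1" and sym: "\<beta>0 \<bullet> (\<Sigma> *v \<beta>) = \<beta> \<bullet> (\<Sigma> *v \<beta>0)"
  defines "A0 \<equiv> (\<sigma>0^2 + \<beta>0 \<bullet> (\<Sigma> *v \<beta>0)) / (1 - \<rho>0^2)"
  shows "ln (\<sigma> / \<sigma>0) - 1 / 2 + (\<sigma>0^2 + (\<rho>0 - \<rho>)^2 * A0 + (\<beta>0 - \<beta>) \<bullet> (\<Sigma> *v (\<beta>0 - \<beta>))) / (2 * \<sigma>^2)
       = ln (\<sigma> / \<sigma>0)
         + (1 / (2 * \<sigma>^2) - 1 / (2 * \<sigma>0^2)) * A0
         + (\<rho>^2 / (2 * \<sigma>^2) - \<rho>0^2 / (2 * \<sigma>0^2)) * A0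
         + \<beta> \<bullet> (\<Sigma> *v \<beta>) / (2 * \<sigma>^2)
         - \<beta>0 \<bullet> (\<Sigma> *v \<beta>0) / (2 * \<sigma>0^2)
         - (\<rho> / \<sigma>^2 - \<rho>0 / \<sigma>0^2) * \<rho>0 * A0
         - ((1 / \<sigma>^2) *\<^sub>R \<beta> - (1 / \<sigma>0^2) *\<^sub>R \<beta>0) \<bullet> (\<Sigma> *v \<beta>0)"
proof -
  have "\<rho>0^2 < 1"
    using \<open>\<bar>\<rho>0\<bar> < 1\<close> by (simp add: abs_square_less_1)
  then have "1 - \<rho>0^2 \<noteq> 0"
    by simp
  then have B: "\<beta>0 \<bullet> (\<Sigma> *v \<beta>0) = A0 * (1 - \<rho>0^2) - \<sigma>0^2"
    unfolding A0_def by simp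
  have "(\<beta>0 - \<beta>) \<bullet> (\<Sigma> *v (\<beta>0 - \<beta>))
      = \<beta>0 \<bullet> (\<Sigma> *v \<beta>0) - 2 * (\<beta> \<bullet> (\<Sigma> *v \<beta>0)) + \<beta> \<bullet> (\<Sigma> *v \<beta>)"
    using sym by (simp add: matrix_vector_mult_diff_distrib inner_diff_left inner_diff_right)
  moreover have "((1 / \<sigma>^2) *\<^sub>R \<beta> - (1 / \<sigma>0^2) *\<^sub>R \<beta>0) \<bullet> (\<Sigma> *v \<beta>0)
      = \<beta> \<bullet> (\<Sigma> *v \<beta>0) / \<sigma>^2 - \<beta>0 \<bullet> (\<Sigma> *v \<beta>0) / \<sigma>0^2"
    by (simp add: inner_diff_left)
  ultimately show ?thesis
    unfolding B using assms(1,2) by (simp add: field_simps) algebra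
qed

theorem lemma3:
  fixes M :: "'a measure"
    and eps :: "nat \<Rightarrow> 'a \<Rightarrow> real"
    and z :: "nat \<Rightarrow> real ^ 'm"
    and \<rho>0 \<sigma>0 \<rho> \<sigma> :: real
    and \<beta>0 \<beta> :: "real ^ 'm"
    and \<Sigma>z :: "real ^ 'm ^ 'm"
  assumes "prob_space M"
    and "prob_space.indep_vars M (\<lambda>_. borel) eps ({1..} :: nat set)"
    and "\<And>t. t \<ge> 1 \<Longrightarrow> distributed M lborel (eps t) (normal_density 0 \<sigma>0)"
    and "\<sigma>0 > 0" and "\<bar>\<rho>0\<bar> < 1"
    and "\<sigma> > 0"
    and B1a: "(\<lambda>n. (1 / real n) *\<^sub>R (\<Sum>t = 1..n. z t)) \<longlonglongrightarrow> 0"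
    and B1b: "\<And>k. k \<ge> 1 \<Longrightarrow>
               (\<lambda>n. (1 / real n) *\<^sub>R (\<Sum>t = 1..n. outer (z (t + k)) (z t))) \<longlonglongrightarrow> 0"
    and B1c: "(\<lambda>n. (1 / real n) *\<^sub>R (\<Sum>t = 1..n. outer (z t) (z t))) \<longlonglongrightarrow> \<Sigma>z"
    and B2: "\<exists>C > 0. \<forall>t \<ge> 1. \<bar>z t \<bullet> \<beta>0\<bar> < C"
  shows "let X = ar_proc \<rho>0 \<beta>0 z eps;
             A0 = (\<sigma>0\<^sup>2 + \<beta>0 \<bullet> (\<Sigma>z *v \<beta>0)) / (1 - \<rho>0\<^sup>2)
         in (\<lambda>n. (1 / real n) *
               prob_space.expectation M (\<lambda>\<omega>.
                  ln (ar_density \<rho>0 \<beta>0 \<sigma>0 z n (\<lambda>t. X t \<omega>)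
                      / ar_density \<rho> \<beta> \<sigma> z n (\<lambda>t. X t \<omega>))))
            \<longlonglongrightarrow>
            ln (\<sigma> / \<sigma>0)
            + (1 / (2 * \<sigma>\<^sup>2) - 1 / (2 * \<sigma>0\<^sup>2)) * A0
            + (\<rho>\<^sup>2 / (2 * \<sigma>\<^sup>2) - \<rho>0\<^sup>2 / (2 * \<sigma>0\<^sup>2)) * A0
            + \<beta> \<bullet> (\<Sigma>z *v \<beta>) / (2 * \<sigma>\<^sup>2)
            - \<beta>0 \<bullet> (\<Sigma>z *v \<beta>0) / (2 * \<sigma>0\<^sup>2)
            - (\<rho> / \<sigma>\<^sup>2 - \<rho>0 / \<sigma>0\<^sup>2) * \<rho>0 * A0
            - ((1 / \<sigma>\<^sup>2) *\<^sub>R \<beta> - (1 / \<sigma>0\<^sup>2) *\<^sub>R \<beta>0) \<bullet> (\<Sigma>z *v \<beta>0)"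
proof -
  interpret gaussian_white_noise M eps \<sigma>0
    using assms(1-4) by (simp add: gaussian_white_noise_def gaussian_white_noise_axioms_def)
  obtain C where C: "\<And>t. t \<ge> 1 \<Longrightarrow> \<bar>z t \<bullet> \<beta>0\<bar> \<le> C"
    using B2 by (auto intro: less_imp_le)
  have square: "cesaro_mean (\<lambda>t. (z t \<bullet> u)^2) \<longlonglongrightarrow> u \<bullet> (\<Sigma>z *v u)" for u
    using cesaro_outer_inner[OF B1c, of u u] by (simp add: power2_eq_square)
  have lag: "cesaro_mean (\<lambda>s. (z s \<bullet> \<beta>0) * (z (s + k) \<bullet> v)) \<longlonglongrightarrow> 0"
    if "k \<ge> 1" for k v
    using cesaro_outer_inner[OF B1b[OF that], of v \<beta>0] by (simp add: mult.commute)
  have "(\<lambda>n. (1 / real n) *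
            expectation (\<lambda>\<omega>. ln (ar_density \<rho>0 \<beta>0 \<sigma>0 z n (\<lambda>t. ar_proc \<rho>0 \<beta>0 z eps t \<omega>)
                                  / ar_density \<rho> \<beta> \<sigma> z n (\<lambda>t. ar_proc \<rho>0 \<beta>0 z eps t \<omega>))))
         \<longlonglongrightarrow> ln (\<sigma> / \<sigma>0) - 1 / 2 + (\<sigma>0^2 + (\<rho>0 - \<rho>)^2 * ((\<sigma>0^2 + \<beta>0 \<bullet> (\<Sigma>z *v \<beta>0)) / (1 - \<rho>0^2))
             + (\<beta>0 - \<beta>) \<bullet> (\<Sigma>z *v (\<beta>0 - \<beta>))) / (2 * \<sigma>^2)"
    by (rule kl_rate_tendsto[OF assms(5,6) C square lag square lag])
  then show ?thesis
    unfolding Let_def kl_rate_closed_form[OF assms(6,4,5) cesaro_outer_symmetric[OF B1c]] .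
qed

end
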